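(* The scheme $S_h$ is monotone: for all $t\in\mathbb{R}$, all $x\in\mathcal{X}_n$ and all $u,v:\mathcal{X}_n\to\mathbb{R}$ with $u\le v$ on $\mathcal{X}_n$, we have $S_h(u,t,x)\ge S_h(v,t,x)$.
   Context: Let $\Omega\subset\mathbb{R}^d$ be open and bounded and $\mathcal{X}_n=\{x_1,\dots,x_n\}\subset\bar\Omega$ a finite point cloud with resolution parameter $h>0$. Each $x\in\mathcal{X}_n$ has a neighbor set $N_h(x)\subset\mathcal{X}_n$; let $V_h(x):=\{y-x:y\in N_h(x)\}$, and let $d\theta := \max_{x\in\mathcal{X}_n}\max_{|p|=1}\min_{q\in V_h(x)}\arccos\left(\frac{p\cdot q}{|p||q|}\right)$. For $u:\mathcal{X}_n\to\mathbb{R}$, $t\in\mathbb{R}$, $x\in\mathcal{X}_n$, let \[ P_h^-(u,t,x) := \{p\in\mathbb{R}^d : -p\in V_h(x), \text{ and for all } y\in N_h(x),\ p\cdot(y-x)<0\implies u(y)\le t\}. \] Let $H:\mathbb{R}^{d\times d}_{sym}\times\mathbb{R}^d\times C^\infty(\mathbb{R}^d)\times\Omega\to\mathbb{R}$ be a given Hamiltonian, and let $F_h=F_h(p,u,t,x)$ (with $p\in\mathbb{R}^d$, $u:\mathcal{X}_n\to\mathbb{R}$, $t\in\mathbb{R}$, $x\in\mathcal{X}_n$) be a real-valued function satisfying: (F1) $F_h$ is monotone: $u\le v$ implies $F_h(p,u,t,x)\ge F_h(p,v,t,x)$ for all $p,t,x$; (F2) $F_h$ is continuous in $u$ and $t$;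 (F3) there are constants $C$ and $m_1,m_2\ge 1$ such that for all $x$, $p$ and $u\in C^\infty(\mathbb{R}^d)$, $|F_h(p,u,u(x),x) - H(\nabla^2 u(x),p,u,x)|\le C(h^{m_1}+d\theta^{m_2})$. The scheme is \[ S_h(u,t,x) := \begin{cases} \max_{p\in P_h^-(u,t,x)} F_h(p,u,t,x) & \text{if } P_h^-(u,t,x)\neq\emptyset,\\ -\infty & \text{otherwise.}\end{cases} \] *)

theory Defs
  imports "HOL-Analysis.Analysis" "HOL-Library.Extended_Real"
begin

definition Vh :: "(real^'d \<Rightarrow> (real^'d) set) \<Rightarrow> real^'d \<Rightarrow> (real^'d) set" where
  "Vh N x = (\<lambda>y. y - x) ` N x"

definition Pminus :: "(real^'d \<Rightarrow> (real^'d) set) \<Rightarrow> (real^'d \<Rightarrow> real) \<Rightarrow> real \<Rightarrow> real^'d \<Rightarrow> (real^'d) set" where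
  "Pminus N u t x = {p. - p \<in> Vh N x \<and> (\<forall>y\<in>N x. p \<bullet> (y - x) < 0 \<longrightarrow> u y \<le> t)}"

definition Sh :: "(real^'d \<Rightarrow> (real^'d) set) \<Rightarrow>
    (real^'d \<Rightarrow> (real^'d \<Rightarrow> real) \<Rightarrow> real \<Rightarrow> real^'d \<Rightarrow> real) \<Rightarrow>
    (real^'d \<Rightarrow> real) \<Rightarrow> real \<Rightarrow> real^'d \<Rightarrow> ereal" where
  "Sh N F u t x = (if Pminus N u t x \<noteq> {}
      then ereal (Max ((\<lambda>p. F p u t x) ` Pminus N u t x)) else - \<infinity>)"

end

theory Submission
  imports Defs
begin

(* Raising u to v can only shrink the set of admissible upwind directions P_h^-, and by (F1) it
   lowers every value F_h(p, -, t, x); a maximum of smaller values over a smaller set is smaller. *)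

lemma Pminus_antimono:
  assumes "\<forall>y\<in>N x. u y \<le> v y"
  shows "Pminus N v t x \<subseteq> Pminus N u t x"
  using assms unfolding Pminus_def by force

lemma finite_Pminus:
  assumes "finite (N x)"
  shows "finite (Pminus N u t x)"
proof -
  have "Pminus N u t x \<subseteq> uminus ` Vh N x"
    unfolding Pminus_def by (auto intro: image_eqI[where x = "- _"])
  moreover have "finite (Vh N x)"
    using assms unfolding Vh_def by simp
  ultimately show ?thesis
    by (rule finite_subset[OF _ finite_imageI])
qed

lemma Max_image_mono:
  fixes f g :: "'a \<Rightarrow> 'b::linorder"
  assumes "A \<subseteq> B" "A \<noteq> {}" "finite B" "\<And>a. a \<in> A \<Longrightarrow> f a \<le> g a"
  shows "Max (f ` A) \<le> Max (g ` B)"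
proof -
  have "finite (f ` A)"
    using assms(1,3) by (metis finite_subset finite_imageI)
  moreover have "f a \<le> Max (g ` B)" if "a \<in> A" for a
    using assms that by (meson Max_ge finite_imageI imageI order_trans subsetD)
  ultimately show ?thesis
    using assms(2) by simp
qed

lemma Sh_antimono:
  assumes "finite (N x)" "\<forall>y\<in>N x. u y \<le> v y"
    and "\<And>p. p \<in> Pminus N v t x \<Longrightarrow> F p v t x \<le> F p u t x"
  shows "Sh N F v t x \<le> Sh N F u t x"
proof (cases "Pminus N v t x = {}")
  case True
  then show ?thesis by (simp add: Sh_def)
next
  case False
  have sub: "Pminus N v t x \<subseteq> Pminus N u t x"
    using assms(2) by (rule Pminus_antimono)
  then have "Max ((\<lambda>p. F p v t x) ` Pminus N v t x) \<le> Max ((\<lambda>p. F p u t x) ` Pminus N u t x)"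
    using False finite_Pminus[of N x u t, OF assms(1)] assms(3) by (rule Max_image_mono)
  then show ?thesis
    using False sub by (auto simp: Sh_def)
qed

theorem proposition2:
  fixes \<Omega> :: "(real^'d) set" and X :: "(real^'d) set" and h :: real
    and N :: "real^'d \<Rightarrow> (real^'d) set"
    and F :: "real^'d \<Rightarrow> (real^'d \<Rightarrow> real) \<Rightarrow> real \<Rightarrow> real^'d \<Rightarrow> real"
    and u v :: "real^'d \<Rightarrow> real" and t :: real and x :: "real^'d"
  assumes "open \<Omega>" and "bounded \<Omega>"
    and "finite X" and "X \<subseteq> closure \<Omega>" and "h > 0"
    and "\<And>z. z \<in> X \<Longrightarrow> N z \<subseteq> X"
    and F1: "\<And>p w w' s z. z \<in> X \<Longrightarrow> (\<forall>y\<in>X. w y \<le> w' y) \<Longrightarrow> F p w s z \<ge> F p w' s z"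
    and F2u: "\<And>p w s z ws. z \<in> X \<Longrightarrow> (\<forall>y\<in>X. (\<lambda>k. ws k y) \<longlonglongrightarrow> w y) \<Longrightarrow>
               (\<lambda>k. F p (ws k) s z) \<longlonglongrightarrow> F p w s z"
    and F2t: "\<And>p w z. z \<in> X \<Longrightarrow> continuous_on UNIV (\<lambda>s. F p w s z)"
    and "x \<in> X" and "\<forall>y\<in>X. u y \<le> v y"
  shows "Sh N F u t x \<ge> Sh N F v t x"
proof (rule Sh_antimono)
  have "N x \<subseteq> X"
    using assms(6,10) .
  then show "finite (N x)" "\<forall>y\<in>N x. u y \<le> v y"
    using assms(3,11) finite_subset by blast+
  show "F p v t x \<le> F p u t x" for p
    using F1 assms(10,11) by blast
qed

end
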